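(* Let $\mathcal{D}\subset\mathbb{R}^2$ be open and bounded, $\mathcal{K}=\{0,1,2\}$, $\boldsymbol{\phi}=(\phi_0,\phi_1,\phi_2)\in\mathcal{C}^\infty(\mathbb{R}^2,\mathbb{R}^3)$ with $\phi_0\equiv0$. Let $\hat x\in\mathcal{E}_{\mathcal{K}}(\boldsymbol{\phi})$ and assume $D\widehat{\boldsymbol{\phi}}_{\mathcal{K}}(\hat x)$ is invertible. Then for all $k\in\mathcal{K}$, $$\beta_k=\arccos\frac{\nabla(\phi_{[k+1]_3}-\phi_k)\cdot\nabla(\phi_k-\phi_{[k+2]_3})}{|\nabla(\phi_{[k+1]_3}-\phi_k)|\,|\nabla(\phi_k-\phi_{[k+2]_3})|},$$ with gradients evaluated at $\hat x$, where $[j]_3$ denotes $j$ modulo $3$.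
   Context: For $j\in\mathcal{K}$, $\Omega_j(\boldsymbol{\phi})=\operatorname{int}\{x\in\mathcal{D}\mid\phi_j(x)\le\phi_m(x)\ \forall m\ne j\}$; for $\mathcal{I}\subset\mathcal{K}$, $\mathcal{E}_{\mathcal{I}}(\boldsymbol{\phi})=\bigcap_{j\in\mathcal{I}}\partial\Omega_j(\boldsymbol{\phi})$; $\widehat{\boldsymbol{\phi}}_{\mathcal{K}}=(\phi_0-\phi_1,\phi_0-\phi_2)$. For $\mathcal{I}\in\{\{0,1\},\{1,2\},\{0,2\}\}$, $\mathbb{D}_{\mathcal{I}}$ denotes the half-tangent to the curve $\mathcal{E}_{\mathcal{I}}(\boldsymbol{\phi})$ at $\hat x$. In polar coordinates centered at $\hat x$ with angle $\vartheta\in[0,2\pi]$, $\vartheta=0$ along $\mathbb{D}_{\{0,2\}}$, let $\vartheta_0$ be the angle of $\mathbb{D}_{\{0,1\}}$ and $\vartheta_1$ that of $\mathbb{D}_{\{1,2\}}$, labels of $\phi_0,\phi_2$ being exchanged if necessary so that $\vartheta_0\le\vartheta_1$; then $\beta_0=\vartheta_0$, $\beta_1=\vartheta_1-\vartheta_0$, $\beta_2=2\pi-\vartheta_1$. *)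

theory Defs
  imports "HOL-Analysis.Analysis"
begin

type_synonym pt = "real^2"

primrec C_k :: "nat \<Rightarrow> (pt \<Rightarrow> real) \<Rightarrow> bool" where
  "C_k 0 f = continuous_on UNIV f"
| "C_k (Suc n) f = (f differentiable_on UNIV \<and>
       (\<forall>v. C_k n (\<lambda>x. frechet_derivative f (at x) v)))"

definition smooth :: "(pt \<Rightarrow> real) \<Rightarrow> bool" where
  "smooth f = (\<forall>n. C_k n f)"

definition region :: "(nat \<Rightarrow> pt \<Rightarrow> real) \<Rightarrow> pt set \<Rightarrow> nat \<Rightarrow> pt set" where
  "region \<phi> D j = interior {x \<in> D. \<forall>m\<in>{0,1,2::nat}. m \<noteq> j \<longrightarrow> \<phi> j x \<le> \<phi> m x}"

definition edge :: "(nat \<Rightarrow> pt \<Rightarrow> real) \<Rightarrow> pt set \<Rightarrow> nat set \<Rightarrow> pt set" where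
  "edge \<phi> D I = (\<Inter>j\<in>I. frontier (region \<phi> D j))"

definition half_tangent :: "pt set \<Rightarrow> pt \<Rightarrow> pt \<Rightarrow> bool" where
  "half_tangent S x d = (norm d = 1 \<and> x islimpt S \<and>
      ((\<lambda>y. (1 / norm (y - x)) *\<^sub>R (y - x)) \<longlongrightarrow> d) (at x within S))"

definition rot :: "real \<Rightarrow> pt \<Rightarrow> pt" where
  "rot t a = vector [cos t * a$1 - sin t * a$2, sin t * a$1 + cos t * a$2]"

definition grad :: "(pt \<Rightarrow> real) \<Rightarrow> pt \<Rightarrow> pt" where
  "grad f x = (\<chi> i. frechet_derivative f (at x) (axis i 1))"

definition hatphi :: "(nat \<Rightarrow> pt \<Rightarrow> real) \<Rightarrow> pt \<Rightarrow> real^2" where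
  "hatphi \<phi> x = vector [\<phi> 0 x - \<phi> 1 x, \<phi> 0 x - \<phi> 2 x]"

definition beta :: "real \<Rightarrow> real \<Rightarrow> nat \<Rightarrow> real" where
  "beta t0 t1 k = (if k = 0 then t0 else if k = 1 then t1 - t0 else 2 * pi - t1)"

definition angle_formula :: "(nat \<Rightarrow> pt \<Rightarrow> real) \<Rightarrow> pt \<Rightarrow> nat \<Rightarrow> real" where
  "angle_formula \<phi> x k =
     (let g1 = grad (\<lambda>y. \<phi> ((k + 1) mod 3) y - \<phi> k y) x;
          g2 = grad (\<lambda>y. \<phi> k y - \<phi> ((k + 2) mod 3) y) x
      in arccos ((g1 \<bullet> g2) / (norm g1 * norm g2)))"

definition swap02 :: "nat \<Rightarrow> nat" where
  "swap02 j = (if j = 0 then 2 else if j = 2 then 0 else j)"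

end

theory Submission
  imports Defs
begin

(* Write g_j for the gradient of phi_j at the junction. Along the edge between phases i and j
   the difference phi_i - phi_j vanishes while the third phase m stays above, so to first order
   (g_j - g_i) . d = 0 and (g_m - g_i) . d >= 0 for the edge direction d; invertibility of the
   Jacobian makes the inequality strict. In the plane each difference g_j - g_i is therefore a
   nonzero multiple of the normal of its edge, and the strict inequalities fix the signs of these
   multiples and of the sines of the angles between the edges, which forces 0 < t0 < pi,
   0 < t1 - t0 < pi and pi < t1. Up to these signs, the cosine of the angle between two gradient
   differences is the cosine of the angle between the corresponding edges, and arccos returns
   beta. If t1 < t0 the same argument applies after exchanging phases 0 and 2. *)

definition perp :: "pt \<Rightarrow> pt" where
  "perp = rot (pi / 2)"

lemma perp_eq: "perp v = vector [- v$2, v$1]"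
  by (simp add: perp_def rot_def)

lemma inner_pt: "x \<bullet> y = x$1 * y$1 + x$2 * y$2" for x y :: pt
  by (simp add: inner_vec_def sum_2)

lemma rot_rot: "rot s (rot t u) = rot (s + t) u"
  by (simp add: rot_def vec_eq_iff forall_2 cos_add sin_add algebra_simps)

lemma rot_zero: "rot 0 u = u"
  by (simp add: rot_def vec_eq_iff forall_2)

lemma inner_rot_rot: "rot s u \<bullet> rot t u = cos (t - s) * (u \<bullet> u)"
  by (simp add: rot_def inner_pt cos_diff algebra_simps power2_eq_square)

lemma norm_rot [simp]: "norm (rot t u) = norm u"
  using inner_rot_rot[of t u t] by (simp add: norm_eq_sqrt_inner)

lemma inner_perp_perp [simp]: "perp x \<bullet> perp y = x \<bullet> y"
  by (simp add: perp_eq inner_pt)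

lemma norm_perp [simp]: "norm (perp x) = norm x"
  by (simp add: norm_eq_sqrt_inner)

lemma inner_perp_rot_rot: "perp (rot s u) \<bullet> rot t u = sin (t - s) * (u \<bullet> u)"
  by (simp add: perp_def rot_rot inner_rot_rot cos_diff sin_diff cos_add sin_add)

lemma orthogonal_eq_scaleR_perp:
  assumes "norm v = 1" and "p \<bullet> v = 0"
  shows "p = (p \<bullet> perp v) *\<^sub>R perp v"
proof -
  have "v$1^2 + v$2^2 = 1"
    using assms(1) by (simp add: norm_eq_sqrt_inner inner_pt power2_eq_square)
  moreover have "p$1 * v$1 = - (p$2 * v$2)"
    using assms(2) by (simp add: inner_pt)
  ultimately show ?thesis
    by (simp add: vec_eq_iff forall_2 perp_eq inner_pt) algebra
qed

lemma junction_sign_pattern: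
  fixes A B C t0 t1 :: real
  assumes t: "0 \<le> t0" "t0 \<le> t1" "t1 < 2 * pi"
    and a0: "0 < - A * sin t0" and b0: "0 < B * sin t0" and a1: "0 < - A * sin (t1 - t0)"
    and c1: "0 < C * sin (t0 - t1)" and b1: "0 < - B * sin t1"
  shows "A < 0 \<and> 0 < B \<and> C < 0 \<and> t0 < pi \<and> t1 - t0 < pi \<and> pi < t1"
proof -
  have below_pi: "x < pi" if "0 < sin x" "x < 2 * pi" for x :: real
    using sin_le_zero[of x] that by fastforce
  have above_pi: "pi < x" if "sin x < 0" "0 \<le> x" for x :: real
    using sin_ge_zero[of x] that by fastforce
  have "0 < sin t0"
  proof (rule ccontr)
    assume "\<not> 0 < sin t0"
    then have "sin t0 < 0" "B < 0"
      using b0 by (auto simp: zero_less_mult_iff)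
    then have "pi < t0" "0 < sin t1"
      using above_pi t b1 by (auto simp: mult_less_0_iff)
    then show False
      using below_pi t by force
  qed
  then have "A < 0" "0 < B"
    using a0 b0 by (auto simp: zero_less_mult_iff mult_less_0_iff)
  then have "0 < sin (t1 - t0)" "sin t1 < 0"
    using a1 b1 by (auto simp: zero_less_mult_iff mult_less_0_iff)
  moreover have "sin (t0 - t1) = - sin (t1 - t0)"
    by (metis minus_diff_eq sin_minus)
  ultimately have "C < 0"
    using c1 by (auto simp: mult_less_0_iff)
  with \<open>A < 0\<close> \<open>0 < B\<close> \<open>0 < sin t0\<close> \<open>0 < sin (t1 - t0)\<close> \<open>sin t1 < 0\<close> show ?thesis
    using below_pi above_pi t by auto
qed

definition vertex_angle :: "(nat \<Rightarrow> pt) \<Rightarrow> nat \<Rightarrow> real" where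
  "vertex_angle g k =
     (let n1 = g ((k + 1) mod 3) - g k; n2 = g k - g ((k + 2) mod 3)
      in arccos ((n1 \<bullet> n2) / (norm n1 * norm n2)))"

lemma vertex_angle_simps:
  "vertex_angle g 0 = arccos (((g 1 - g 0) \<bullet> (g 0 - g 2)) / (norm (g 1 - g 0) * norm (g 0 - g 2)))"
  "vertex_angle g 1 = arccos (((g 2 - g 1) \<bullet> (g 1 - g 0)) / (norm (g 2 - g 1) * norm (g 1 - g 0)))"
  "vertex_angle g 2 = arccos (((g 0 - g 2) \<bullet> (g 2 - g 1)) / (norm (g 0 - g 2) * norm (g 2 - g 1)))"
  by (simp_all add: vertex_angle_def Let_def numeral_2_eq_2)

lemma vertex_angle_normal_form:
  assumes "norm d01 = 1" "norm d02 = 1" "norm d12 = 1"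
    and "g 1 - g 0 = A *\<^sub>R perp d01" "g 2 - g 0 = B *\<^sub>R perp d02" "g 2 - g 1 = C *\<^sub>R perp d12"
    and "A < 0" "0 < B" "C < 0"
  shows "vertex_angle g 0 = arccos (d01 \<bullet> d02)"
    and "vertex_angle g 1 = arccos (d12 \<bullet> d01)"
    and "vertex_angle g 2 = arccos (d02 \<bullet> d12)"
proof -
  have "g 0 - g 2 = - (g 2 - g 0)"
    by simp
  then show "vertex_angle g 0 = arccos (d01 \<bullet> d02)"
    "vertex_angle g 1 = arccos (d12 \<bullet> d01)"
    "vertex_angle g 2 = arccos (d02 \<bullet> d12)"
    unfolding vertex_angle_simps using assms by simp_all
qed

(* g j stands for the gradient of phase j at a triple junction whose edges {0,1}, {1,2}, {0,2} leave
   in the directions rot t0 u, rot t1 u, u. Along each edge its two phases are minimal to first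
   order, and no nonzero direction is annihilated by all differences g i - g j. *)
definition junction_config :: "(nat \<Rightarrow> pt) \<Rightarrow> pt \<Rightarrow> real \<Rightarrow> real \<Rightarrow> bool" where
  "junction_config g u t0 t1 \<longleftrightarrow> norm u = 1
     \<and> (\<forall>v. (\<forall>i\<in>{0,1,2}. \<forall>j\<in>{0,1,2}. g i \<bullet> v = g j \<bullet> v) \<longrightarrow> v = 0)
     \<and> (\<forall>i\<in>{0,1}. \<forall>m\<in>{0,1,2}. 0 \<le> (g m - g i) \<bullet> rot t0 u)
     \<and> (\<forall>i\<in>{1,2}. \<forall>m\<in>{0,1,2}. 0 \<le> (g m - g i) \<bullet> rot t1 u)
     \<and> (\<forall>i\<in>{0,2}. \<forall>m\<in>{0,1,2}. 0 \<le> (g m - g i) \<bullet> u)"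

lemma junction_edge_tangent:
  fixes g :: "nat \<Rightarrow> 'a::real_inner"
  assumes nondeg: "\<forall>v. (\<forall>i\<in>{0,1,2}. \<forall>j\<in>{0,1,2}. g i \<bullet> v = g j \<bullet> v) \<longrightarrow> v = 0"
    and edge: "\<forall>i\<in>I. \<forall>m\<in>{0,1,2}. 0 \<le> (g m - g i) \<bullet> d"
    and "i \<in> I" "j \<in> I" and ijm: "{i, j, m} = {0,1,2}" and "d \<noteq> 0"
  shows "(g j - g i) \<bullet> d = 0" and "0 < (g m - g i) \<bullet> d"
proof -
  have K: "i \<in> {0,1,2}" "j \<in> {0,1,2}" "m \<in> {0,1,2}"
    unfolding ijm[symmetric] by simp_all
  have "0 \<le> (g j - g i) \<bullet> d" "0 \<le> (g i - g j) \<bullet> d" "0 \<le> (g m - g i) \<bullet> d"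
    using edge \<open>i \<in> I\<close> \<open>j \<in> I\<close> K by blast+
  then have gij: "g i \<bullet> d = g j \<bullet> d"
    by (simp add: inner_diff_left)
  then show "(g j - g i) \<bullet> d = 0"
    by (simp add: inner_diff_left)
  show "0 < (g m - g i) \<bullet> d"
  proof (rule ccontr)
    assume "\<not> 0 < (g m - g i) \<bullet> d"
    with \<open>0 \<le> (g m - g i) \<bullet> d\<close> have "g m \<bullet> d = g i \<bullet> d"
      by (simp add: inner_diff_left)
    with gij have "g p \<bullet> d = g q \<bullet> d" if "p \<in> {i, j, m}" "q \<in> {i, j, m}" for p q
      using that by auto
    then have "\<forall>p\<in>{0,1,2}. \<forall>q\<in>{0,1,2}. g p \<bullet> d = g q \<bullet> d"
      unfolding ijm by blast
    with nondeg \<open>d \<noteq> 0\<close> show False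
      by blast
  qed
qed

lemma junction_config_normals:
  assumes "junction_config g u t0 t1"
  obtains A B C where
    "g 1 - g 0 = A *\<^sub>R perp (rot t0 u)" "g 2 - g 0 = B *\<^sub>R perp (rot 0 u)"
    "g 2 - g 1 = C *\<^sub>R perp (rot t1 u)"
    "0 < - A * sin t0" "0 < B * sin t0" "0 < - A * sin (t1 - t0)" "0 < C * sin (t0 - t1)"
    "0 < - B * sin t1"
proof -
  have u: "norm u = 1"
    and nondeg: "\<forall>v. (\<forall>i\<in>{0,1,2}. \<forall>j\<in>{0,1,2}. g i \<bullet> v = g j \<bullet> v) \<longrightarrow> v = 0"
    and e01: "\<forall>i\<in>{0,1}. \<forall>m\<in>{0,1,2}. 0 \<le> (g m - g i) \<bullet> rot t0 u"
    and e12: "\<forall>i\<in>{1,2}. \<forall>m\<in>{0,1,2}. 0 \<le> (g m - g i) \<bullet> rot t1 u"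
    and e02: "\<forall>i\<in>{0,2}. \<forall>m\<in>{0,1,2}. 0 \<le> (g m - g i) \<bullet> rot 0 u"
    using assms unfolding junction_config_def rot_zero by blast+
  have unit: "norm (rot s u) = 1" for s
    using u by simp
  then have nz: "rot s u \<noteq> 0" for s
    by (metis norm_zero zero_neq_one)
  note tangent01 = junction_edge_tangent[where I="{0,1}" and d="rot t0 u", OF nondeg e01 _ _ _ nz]
    and tangent12 = junction_edge_tangent[where I="{1,2}" and d="rot t1 u", OF nondeg e12 _ _ _ nz]
    and tangent02 = junction_edge_tangent[where I="{0,2}" and d="rot 0 u", OF nondeg e02 _ _ _ nz]
  have t01: "(g 1 - g 0) \<bullet> rot t0 u = 0" "0 < (g 2 - g 0) \<bullet> rot t0 u" "0 < (g 2 - g 1) \<bullet> rot t0 u"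
    using tangent01[where i=0 and j=1 and m=2] tangent01[where i=1 and j=0 and m=2]
    by (simp_all add: insert_commute)
  have t12: "(g 2 - g 1) \<bullet> rot t1 u = 0" "0 < (g 0 - g 1) \<bullet> rot t1 u" "0 < (g 0 - g 2) \<bullet> rot t1 u"
    using tangent12[where i=1 and j=2 and m=0] tangent12[where i=2 and j=1 and m=0]
    by (simp_all add: insert_commute)
  have t02: "(g 2 - g 0) \<bullet> rot 0 u = 0" "0 < (g 1 - g 0) \<bullet> rot 0 u"
    using tangent02[where i=0 and j=2 and m=1] by (simp_all add: insert_commute)
  define A B C
    where "A = (g 1 - g 0) \<bullet> perp (rot t0 u)" and "B = (g 2 - g 0) \<bullet> perp (rot 0 u)"
      and "C = (g 2 - g 1) \<bullet> perp (rot t1 u)"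
  have normals: "g 1 - g 0 = A *\<^sub>R perp (rot t0 u)" "g 2 - g 0 = B *\<^sub>R perp (rot 0 u)"
    "g 2 - g 1 = C *\<^sub>R perp (rot t1 u)"
    unfolding A_def B_def C_def using orthogonal_eq_scaleR_perp[OF unit] t01(1) t12(1) t02(1)
    by blast+
  have "u \<bullet> u = 1"
    using u by (simp add: power2_norm_eq_inner[symmetric])
  then have "0 < - A * sin t0" "0 < B * sin t0" "0 < - A * sin (t1 - t0)" "0 < C * sin (t0 - t1)"
    "0 < - B * sin t1"
    using t01(2,3) t12(2,3) t02(2)
    unfolding minus_diff_eq[of "g 1" "g 0", symmetric] minus_diff_eq[of "g 2" "g 0", symmetric] normals
    by (simp_all add: inner_perp_rot_rot)
  with normals show thesis
    by (rule that)
qed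

lemma triple_junction_angles:
  assumes cfg: "junction_config g u t0 t1"
    and t: "0 \<le> t0" "t0 \<le> t1" "t1 < 2 * pi" and k: "k \<in> {0,1,2}"
  shows "beta t0 t1 k = vertex_angle g k"
proof -
  obtain A B C where normals:
    "g 1 - g 0 = A *\<^sub>R perp (rot t0 u)" "g 2 - g 0 = B *\<^sub>R perp (rot 0 u)"
    "g 2 - g 1 = C *\<^sub>R perp (rot t1 u)"
    and "0 < - A * sin t0" "0 < B * sin t0" "0 < - A * sin (t1 - t0)" "0 < C * sin (t0 - t1)"
    "0 < - B * sin t1"
    using junction_config_normals[OF cfg] .
  then have signs: "A < 0" "0 < B" "C < 0" and range: "t0 < pi" "t1 - t0 < pi" "pi < t1"
    using junction_sign_pattern[OF t] by blast+
  have "norm u = 1"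
    using cfg by (simp add: junction_config_def)
  then have unit: "norm (rot s u) = 1" and uu: "u \<bullet> u = 1" for s
    by (simp_all add: power2_norm_eq_inner[symmetric])
  note angles = vertex_angle_normal_form[OF unit unit unit normals signs]
  have "vertex_angle g 0 = t0"
    using angles(1) range t by (simp add: inner_rot_rot uu arccos_cos)
  moreover have "vertex_angle g 1 = t1 - t0"
    using angles(2) range t by (simp add: inner_rot_rot uu arccos_cos cos_minus[of "t1 - t0", simplified])
  moreover have "vertex_angle g 2 = 2 * pi - t1"
    using angles(3) range t arccos_cos[of "2 * pi - t1"] by (simp add: inner_rot_rot uu)
  ultimately show ?thesis
    using k by (auto simp: beta_def)
qed

lemma ball_ball_swap02:
  "(\<forall>i\<in>{0,1,2}. \<forall>j\<in>{0,1,2}. P (swap02 i) (swap02 j)) \<longleftrightarrow> (\<forall>i\<in>{0,1,2}. \<forall>j\<in>{0,1,2}. P i j)"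
  by (auto simp: swap02_def)

lemma junction_config_swap02:
  assumes "junction_config g u t0 t1"
  shows "junction_config (g \<circ> swap02) u t1 t0"
proof -
  have u: "norm u = 1"
    and nondeg: "\<forall>v. (\<forall>i\<in>{0,1,2}. \<forall>j\<in>{0,1,2}. g i \<bullet> v = g j \<bullet> v) \<longrightarrow> v = 0"
    and e01: "\<forall>i\<in>{0,1}. \<forall>m\<in>{0,1,2}. 0 \<le> (g m - g i) \<bullet> rot t0 u"
    and e12: "\<forall>i\<in>{1,2}. \<forall>m\<in>{0,1,2}. 0 \<le> (g m - g i) \<bullet> rot t1 u"
    and e02: "\<forall>i\<in>{0,2}. \<forall>m\<in>{0,1,2}. 0 \<le> (g m - g i) \<bullet> u"
    using assms unfolding junction_config_def by blast+
  have "(\<forall>i\<in>{0,1,2}. \<forall>j\<in>{0,1,2}. g (swap02 i) \<bullet> v = g (swap02 j) \<bullet> v)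
    \<longleftrightarrow> (\<forall>i\<in>{0,1,2}. \<forall>j\<in>{0,1,2}. g i \<bullet> v = g j \<bullet> v)" for v
    by (rule ball_ball_swap02[where P = "\<lambda>i j. g i \<bullet> v = g j \<bullet> v"])
  then have "\<forall>v. (\<forall>i\<in>{0,1,2}. \<forall>j\<in>{0,1,2}. g (swap02 i) \<bullet> v = g (swap02 j) \<bullet> v) \<longrightarrow> v = 0"
    using nondeg by blast
  moreover have "\<forall>i\<in>{0,1}. \<forall>m\<in>{0,1,2}. 0 \<le> (g (swap02 m) - g (swap02 i)) \<bullet> rot t1 u"
    using e12 by (simp add: swap02_def)
  moreover have "\<forall>i\<in>{1,2}. \<forall>m\<in>{0,1,2}. 0 \<le> (g (swap02 m) - g (swap02 i)) \<bullet> rot t0 u"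
    using e01 by (simp add: swap02_def)
  moreover have "\<forall>i\<in>{0,2}. \<forall>m\<in>{0,1,2}. 0 \<le> (g (swap02 m) - g (swap02 i)) \<bullet> u"
    using e02 by (simp add: swap02_def)
  ultimately show ?thesis
    using u by (simp only: junction_config_def comp_apply)
qed

lemma has_derivative_grad:
  assumes "f differentiable (at x)"
  shows "(f has_derivative (\<lambda>v. grad f x \<bullet> v)) (at x)"
proof -
  let ?L = "frechet_derivative f (at x)"
  have deriv: "(f has_derivative ?L) (at x)"
    using assms frechet_derivative_works by blast
  then interpret L: linear ?L
    by (rule has_derivative_linear)
  have "?L v = grad f x \<bullet> v" for v
  proof -
    have "v = v$1 *\<^sub>R axis 1 1 + v$2 *\<^sub>R axis 2 1"
      by (simp add: vec_eq_iff forall_2 axis_def)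
    then have "?L v = v$1 * ?L (axis 1 1) + v$2 * ?L (axis 2 1)"
      by (metis L.add L.scale real_scaleR_def)
    then show ?thesis
      by (simp add: grad_def inner_pt mult.commute)
  qed
  then have "?L = (\<lambda>v. grad f x \<bullet> v)"
    by (simp add: fun_eq_iff)
  then show ?thesis
    using deriv by simp
qed

lemma grad_unique:
  assumes "(f has_derivative (\<lambda>v. g \<bullet> v)) (at x)"
  shows "grad f x = g"
proof -
  have "frechet_derivative f (at x) = (\<lambda>v. g \<bullet> v)"
    using frechet_derivative_at[OF assms] by simp
  then show ?thesis
    by (simp add: grad_def vec_eq_iff inner_axis)
qed

lemma grad_diff:
  assumes "f differentiable (at x)" "h differentiable (at x)"
  shows "grad (\<lambda>y. f y - h y) x = grad f x - grad h x"
  using has_derivative_diff[OF has_derivative_grad[OF assms(1)] has_derivative_grad[OF assms(2)]]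
  by (intro grad_unique) (simp add: inner_diff_left)

lemma smooth_differentiable:
  assumes "smooth f"
  shows "f differentiable (at x)"
proof -
  have "C_k (Suc 0) f"
    using assms by (simp only: smooth_def)
  then show ?thesis
    by (simp add: differentiable_on_def)
qed

lemma half_tangent_min_derivative_nonneg:
  fixes f :: "pt \<Rightarrow> real"
  assumes tangent: "half_tangent S x d" and min: "\<And>y. y \<in> S \<Longrightarrow> f x \<le> f y"
    and deriv: "(f has_derivative f') (at x)"
  shows "0 \<le> f' d"
proof -
  define F where "F = at x within S"
  define U where "U = (\<lambda>y. (1 / norm (y - x)) *\<^sub>R (y - x))"
  have "F \<noteq> bot"
    using tangent by (simp add: F_def half_tangent_def trivial_limit_within)
  have "(U \<longlongrightarrow> d) F"
    using tangent by (simp add: F_def U_def half_tangent_def)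
  moreover have "bounded_linear f'"
    using deriv by (rule has_derivative_bounded_linear)
  ultimately have "((\<lambda>y. f' (U y)) \<longlongrightarrow> f' d) F"
    by (rule bounded_linear.tendsto[rotated])
  moreover have "((\<lambda>y. (f y - f x - f' (y - x)) / norm (y - x)) \<longlongrightarrow> 0) F"
    using has_derivative_at_withinI[OF deriv, of S]
    by (simp add: F_def has_derivative_at_within divide_inverse_commute)
  ultimately have "((\<lambda>y. (f y - f x - f' (y - x)) / norm (y - x) + f' (U y)) \<longlongrightarrow> 0 + f' d) F"
    by (intro tendsto_add)
  moreover have "eventually (\<lambda>y. (f y - f x - f' (y - x)) / norm (y - x) + f' (U y) = (f y - f x) / norm (y - x)) F"
    unfolding F_def eventually_at_filter
    by (simp add: U_def \<open>bounded_linear f'\<close> linear_simps diff_divide_distrib)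
  ultimately have "((\<lambda>y. (f y - f x) / norm (y - x)) \<longlongrightarrow> f' d) F"
    by (simp add: tendsto_cong)
  moreover have "eventually (\<lambda>y. 0 \<le> (f y - f x) / norm (y - x)) F"
    unfolding F_def eventually_at_filter by (simp add: min)
  ultimately show ?thesis
    using \<open>F \<noteq> bot\<close> tendsto_lowerbound by blast
qed

lemma edge_phase_minimal:
  assumes cont: "\<forall>m\<in>{0,1,2}. continuous_on UNIV (\<phi> m)"
    and "x \<in> edge \<phi> D I" "i \<in> I" "I \<subseteq> {0,1,2}" "m \<in> {0,1,2}"
  shows "\<phi> i x \<le> \<phi> m x"
proof -
  have "region \<phi> D i \<subseteq> {y \<in> D. \<forall>m'\<in>{0,1,2}. m' \<noteq> i \<longrightarrow> \<phi> i y \<le> \<phi> m' y}"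
    unfolding region_def by (rule interior_subset)
  then have "region \<phi> D i \<subseteq> {y. \<phi> i y \<le> \<phi> m y}"
    using \<open>m \<in> {0,1,2}\<close> by auto
  moreover have "closed {y. \<phi> i y \<le> \<phi> m y}"
    using cont assms(3-5) by (intro closed_Collect_le) auto
  ultimately have "closure (region \<phi> D i) \<subseteq> {y. \<phi> i y \<le> \<phi> m y}"
    by (rule closure_minimal)
  moreover have "x \<in> closure (region \<phi> D i)"
    using assms(2,3) by (auto simp: edge_def frontier_def)
  ultimately show ?thesis
    by blast
qed

lemma half_tangent_edge_grad:
  assumes diff: "\<forall>j\<in>{0,1,2}. \<forall>y. \<phi> j differentiable (at y)"
    and junction: "x \<in> edge \<phi> D {0,1,2}"
    and tangent: "half_tangent (edge \<phi> D I) x d" and I: "I \<subseteq> {0,1,2}"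
  shows "\<forall>i\<in>I. \<forall>m\<in>{0,1,2}. 0 \<le> (grad (\<phi> m) x - grad (\<phi> i) x) \<bullet> d"
proof (intro ballI)
  fix i m :: nat
  assume "i \<in> I" "m \<in> {0,1,2}"
  have cont: "\<forall>j\<in>{0,1,2}. continuous_on UNIV (\<phi> j)"
    using diff by (simp add: continuous_at_imp_continuous_on differentiable_imp_continuous_within)
  have "i \<in> {0,1,2}"
    using \<open>i \<in> I\<close> I by blast
  have "\<phi> m x - \<phi> i x \<le> \<phi> m y - \<phi> i y" if "y \<in> edge \<phi> D I" for y
  proof -
    have "\<phi> m x = \<phi> i x"
      using edge_phase_minimal[OF cont junction] \<open>i \<in> {0,1,2}\<close> \<open>m \<in> {0,1,2}\<close>
      by (meson order.antisym subset_refl)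
    then show ?thesis
      using edge_phase_minimal[OF cont that \<open>i \<in> I\<close> I \<open>m \<in> {0,1,2}\<close>] by simp
  qed
  moreover have "\<phi> m differentiable (at x)" "\<phi> i differentiable (at x)"
    using diff \<open>i \<in> {0,1,2}\<close> \<open>m \<in> {0,1,2}\<close> by blast+
  then have "((\<lambda>y. \<phi> m y - \<phi> i y) has_derivative (\<lambda>v. (grad (\<phi> m) x - grad (\<phi> i) x) \<bullet> v)) (at x)"
    unfolding inner_diff_left by (intro has_derivative_diff has_derivative_grad)
  ultimately show "0 \<le> (grad (\<phi> m) x - grad (\<phi> i) x) \<bullet> d"
    using half_tangent_min_derivative_nonneg[OF tangent, where f = "\<lambda>y. \<phi> m y - \<phi> i y"
        and f' = "\<lambda>v. (grad (\<phi> m) x - grad (\<phi> i) x) \<bullet> v"] by blast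
qed

lemma grad_nondegenerate:
  assumes diff: "\<forall>j\<in>{0,1,2}. \<phi> j differentiable (at x)"
    and bij: "bij (frechet_derivative (hatphi \<phi>) (at x))"
  shows "\<forall>v. (\<forall>i\<in>{0,1,2}. \<forall>j\<in>{0,1,2}. grad (\<phi> i) x \<bullet> v = grad (\<phi> j) x \<bullet> v) \<longrightarrow> v = 0"
proof (intro allI impI)
  fix v :: pt
  assume equal: "\<forall>i\<in>{0,1,2}. \<forall>j\<in>{0,1,2}. grad (\<phi> i) x \<bullet> v = grad (\<phi> j) x \<bullet> v"
  define g where "g j = grad (\<phi> j) x" for j
  define L :: "pt \<Rightarrow> pt"
    where "L w = ((g 0 - g 1) \<bullet> w) *\<^sub>R axis 1 1 + ((g 0 - g 2) \<bullet> w) *\<^sub>R axis 2 1" for w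
  have "hatphi \<phi> = (\<lambda>y. (\<phi> 0 y - \<phi> 1 y) *\<^sub>R axis 1 1 + (\<phi> 0 y - \<phi> 2 y) *\<^sub>R axis 2 1)"
    by (simp add: fun_eq_iff hatphi_def vec_eq_iff forall_2 axis_def)
  moreover have "\<phi> 0 differentiable (at x)" "\<phi> 1 differentiable (at x)" "\<phi> 2 differentiable (at x)"
    using diff by simp_all
  ultimately have "(hatphi \<phi> has_derivative L) (at x)"
    unfolding L_def g_def inner_diff_left
    by (simp only:) (intro has_derivative_add has_derivative_scaleR_left has_derivative_diff has_derivative_grad)
  then have "frechet_derivative (hatphi \<phi>) (at x) = L"
    by (rule frechet_derivative_at[symmetric])
  then have "inj L"
    using bij by (simp add: bij_is_inj)
  moreover have "g 0 \<bullet> v = g 1 \<bullet> v" "g 0 \<bullet> v = g 2 \<bullet> v"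
    using equal unfolding g_def by blast+
  then have "L v = L 0"
    by (simp add: L_def inner_diff_left)
  ultimately show "v = 0"
    by (rule injD)
qed

lemma angle_formula_eq_vertex_angle:
  assumes "\<forall>j\<in>{0,1,2}. \<phi> j differentiable (at x)" and "k \<in> {0,1,2}"
  shows "angle_formula \<phi> x k = vertex_angle (\<lambda>j. grad (\<phi> j) x) k"
proof -
  have "j mod 3 \<in> {0,1,2}" for j :: nat
    by auto
  then have "\<phi> (j mod 3) differentiable (at x)" for j
    using assms(1) by blast
  moreover have "\<phi> k differentiable (at x)"
    using assms by blast
  ultimately show ?thesis
    by (simp add: angle_formula_def vertex_angle_def Let_def grad_diff)
qed

lemma junction_config_grad:
  assumes diff: "\<forall>j\<in>{0,1,2}. \<forall>y. \<phi> j differentiable (at y)"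
    and junction: "x \<in> edge \<phi> D {0,1,2}" and bij: "bij (frechet_derivative (hatphi \<phi>) (at x))"
    and "half_tangent (edge \<phi> D {0,1}) x (rot t0 u)"
    and "half_tangent (edge \<phi> D {1,2}) x (rot t1 u)"
    and "half_tangent (edge \<phi> D {0,2}) x u"
  shows "junction_config (\<lambda>j. grad (\<phi> j) x) u t0 t1"
proof -
  have "\<forall>j\<in>{0,1,2}. \<phi> j differentiable (at x)"
    using diff by blast
  then have "\<forall>v. (\<forall>i\<in>{0,1,2}. \<forall>j\<in>{0,1,2}. grad (\<phi> i) x \<bullet> v = grad (\<phi> j) x \<bullet> v) \<longrightarrow> v = 0"
    using bij by (rule grad_nondegenerate)
  moreover have "norm u = 1"
    using \<open>half_tangent (edge \<phi> D {0,2}) x u\<close> by (simp add: half_tangent_def)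
  moreover have "\<forall>i\<in>{0,1}. \<forall>m\<in>{0,1,2}. 0 \<le> (grad (\<phi> m) x - grad (\<phi> i) x) \<bullet> rot t0 u"
    by (rule half_tangent_edge_grad[OF diff junction assms(4)]) auto
  moreover have "\<forall>i\<in>{1,2}. \<forall>m\<in>{0,1,2}. 0 \<le> (grad (\<phi> m) x - grad (\<phi> i) x) \<bullet> rot t1 u"
    by (rule half_tangent_edge_grad[OF diff junction assms(5)]) auto
  moreover have "\<forall>i\<in>{0,2}. \<forall>m\<in>{0,1,2}. 0 \<le> (grad (\<phi> m) x - grad (\<phi> i) x) \<bullet> u"
    by (rule half_tangent_edge_grad[OF diff junction assms(6)]) auto
  ultimately show ?thesis
    unfolding junction_config_def by blast
qed

theorem proposition5p2:
  fixes D :: "pt set" and \<phi> :: "nat \<Rightarrow> pt \<Rightarrow> real" and xh d01 d12 d02 :: pt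
    and t0 t1 :: real
  assumes "open D" and "bounded D"
    and "\<forall>j\<in>{0,1,2}. smooth (\<phi> j)" and "\<forall>x. \<phi> 0 x = 0"
    and "xh \<in> edge \<phi> D {0,1,2}"
    and "bij (frechet_derivative (hatphi \<phi>) (at xh))"
    and "half_tangent (edge \<phi> D {0,1}) xh d01"
    and "half_tangent (edge \<phi> D {1,2}) xh d12"
    and "half_tangent (edge \<phi> D {0,2}) xh d02"
    and "0 \<le> t0" and "t0 < 2 * pi" and "d01 = rot t0 d02"
    and "0 \<le> t1" and "t1 < 2 * pi" and "d12 = rot t1 d02"
  shows "if t0 \<le> t1
         then (\<forall>k\<in>{0,1,2}. beta t0 t1 k = angle_formula \<phi> xh k)
         else (\<forall>k\<in>{0,1,2}. beta t1 t0 k = angle_formula (\<phi> \<circ> swap02) xh k)"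
proof -
  have diff: "\<forall>j\<in>{0,1,2}. \<forall>y. \<phi> j differentiable (at y)"
    using assms(3) smooth_differentiable by blast
  then have diff_swap: "\<forall>j\<in>{0,1,2}. (\<phi> \<circ> swap02) j differentiable (at xh)"
    by (simp add: swap02_def)
  have cfg: "junction_config (\<lambda>j. grad (\<phi> j) xh) d02 t0 t1"
    using junction_config_grad[OF diff assms(5,6)] assms(7-9,12,15) by simp
  show ?thesis
  proof (cases "t0 \<le> t1")
    case True
    then show ?thesis
      using triple_junction_angles[OF cfg assms(10) True assms(14)] angle_formula_eq_vertex_angle diff
      by simp
  next
    case False
    then show ?thesis
      using triple_junction_angles[OF junction_config_swap02[OF cfg] assms(13) _ assms(11)]
        angle_formula_eq_vertex_angle[OF diff_swap]
      by (simp add: o_def)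
  qed
qed

end
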